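(* Every point $\zeta\in\partial(\Gamma,\mathcal{P})$ has a strict $\mathcal{G}$-coding (either a strict conical coding of $\zeta$ or a strict parabolic coding of $\zeta$).
   Context: Setup. $\Gamma$ is a finitely generated group hyperbolic relative to a finite nonempty collection $\mathcal{P}$ of infinite subgroups, with $(\Gamma,\mathcal{P})$ non-elementary, and $\mathcal{S}$ a finite symmetric generating set with $P\cap\mathcal{S}$ generating $P$ for each $P\in\mathcal{P}$. $X$ is the Groves–Manning cusped space (the Cayley graph with combinatorial horoballs glued along the cosets $gP$), a locally finite graph with unit edges, metric $d_X$, $\delta$-hyperbolic for a fixed integer $\delta\ge1$; $|g|_X=d_X(\mathrm{id},g)$. Its Gromov boundary is the Bowditch boundary $\partial(\Gamma,\mathcal{P})$, with a fixed metric $d_\partial$ (balls $B_r$, neighborhoods $N_r$, closed neighborhoods $\overline N_r$, $\operatorname{diam}$ w.r.t. $d_\partial$). $\Pi$ is the finite set of points fixed by groups in $\mathcal{P}$, $\Gamma_p$ the group fixing $p\in\Pi$; translates $gp$ are parabolic points, and all other boundary points are conical limit points. $D>0$ is such that any distinct $x,y$ have some $g\in\Gamma$ with $d_\partial(gx,gy)>D$; for $p\in\Pi$, $K_p\subset\partial(\Gamma,\mathcal{P})\setminus\{p\}$ is compact with $\Gamma_pK_p=\partial(\Gamma,\mathcal{P})\setminus\{p\}$, and $D_\Pi>0$ satisfies $D_\Pi<\operatorname{diam}K_p$, $D_\Pi<d_\partial(K_p,p)$ for all $p$. Automaton. Fix $0<\varepsilon<\min(D/5,D_\Pi/5)$,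 a finite set $Z\subset\partial(\Gamma,\mathcal{P})$, and for each $z\in Z$ open sets $V(z),W(z),\hat V(z),\hat W(z)$ and a set $L(z)\subset\Gamma$ such that: if $z$ is conical, $L(z)=\{\alpha_z\}$, $\hat V(z)=\alpha_z^{-1}V(z)$, $\hat W(z)=\alpha_z^{-1}W(z)$; if $z=gp$ is parabolic ($p\in\Pi$), then $L(z)=g\Gamma_p\setminus F_z$ for a finite set $F_z$, $\hat V(z)\subset\hat W(z)\subset\partial(\Gamma,\mathcal{P})\setminus\{p\}$ and $p\notin\overline N_\varepsilon(\hat W(z))$; the sets $V(z)$, $z\in Z$, cover $\partial(\Gamma,\mathcal{P})$; and for all $z\in Z$: (C1) $\operatorname{diam}W(z)<\varepsilon$; (C2) $\operatorname{diam}\hat W(z)>4\varepsilon$; (C3) $\overline N_{2\varepsilon}(\hat V(z))\subset\hat W(z)$; (C4) $W(z)=\{z\}\cup\bigcup_{\alpha\in L(z)}\alpha\hat W(z)$; (C5) $V(z)=\{z\}\cup\bigcup_{\alpha\in L(z)}\alpha\hat V(z)$ and $\overline{V(z)}\subset W(z)$; (C6) for all $y,z\in Z$, $\overline{\hat V(z)}\cap\overline{V(y)}=\emptyset$ iff $\hat V(z)\cap V(y)=\emptyset$. The automaton $\mathcal{G}$ is the directed graph with vertex set $Z$ where, for $y,z\in Z$, there is no edge from $z$ to $y$ if $\hat V(z)\cap V(y)=\emptyset$, and otherwise there is exactly one edge from $z$ to $y$ labeled $\alpha$ for each $\alpha\in L(z)$. For an edge $e$, $\iota(e),\tau(e),\mathrm{Lab}(e)$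 denote its initial vertex, terminal vertex and label. Codings. A strict conical coding is an infinite edge path $\mathbf e=(e_k)_{k\ge1}$ in $\mathcal{G}$; writing $\alpha_k=\mathrm{Lab}(e_k)$, $z_k=\tau(e_k)$ ($k\ge1$), $z_0=\iota(e_1)$, it is a strict coding of $\zeta$ if $\zeta\in\bigcap_{k\ge0}\alpha_1\cdots\alpha_k\overline{W(z_k)}$. A strict parabolic coding is a finite edge path $e_1,\dots,e_n$ ($n\ge0$; for $n=0$ it is a single vertex) whose final vertex $q$ is parabolic; it is a strict coding of $\zeta$ if $\zeta=\alpha_1\cdots\alpha_nq$. *)

theory Defs
  imports "HOL-Analysis.Analysis" "HOL-Algebra.Generated_Groups" "HOL-Algebra.Coset"
begin

definition nbhd :: "real \<Rightarrow> 'a::metric_space set \<Rightarrow> 'a set" where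
  "nbhd r A = {x. \<exists>a\<in>A. dist x a < r}"

definition cnbhd :: "real \<Rightarrow> 'a::metric_space set \<Rightarrow> 'a set" where
  "cnbhd r A = {x. A \<noteq> {} \<and> infdist x A \<le> r}"

definition stab :: "('g,'m) monoid_scheme \<Rightarrow> ('g \<Rightarrow> 'b \<Rightarrow> 'b) \<Rightarrow> 'b \<Rightarrow> 'g set" where
  "stab G act p = {g \<in> carrier G. act g p = p}"

definition parabolic_pts :: "('g,'m) monoid_scheme \<Rightarrow> ('g \<Rightarrow> 'b \<Rightarrow> 'b) \<Rightarrow> 'b set \<Rightarrow> 'b set" where
  "parabolic_pts G act Pp = {act g p | g p. g \<in> carrier G \<and> p \<in> Pp}"

type_synonym ('b,'g) edge = "'b \<times> 'g \<times> 'b"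

definition src :: "('b,'g) edge \<Rightarrow> 'b" where "src e = fst e"
definition lab :: "('b,'g) edge \<Rightarrow> 'g" where "lab e = fst (snd e)"
definition tgt :: "('b,'g) edge \<Rightarrow> 'b" where "tgt e = snd (snd e)"

definition automaton_edges ::
  "'b set \<Rightarrow> ('b \<Rightarrow> 'g set) \<Rightarrow> ('b \<Rightarrow> 'b set) \<Rightarrow> ('b \<Rightarrow> 'b set) \<Rightarrow> ('b,'g) edge set" where
  "automaton_edges Z L Vh V =
     {(z, \<alpha>, y). z \<in> Z \<and> y \<in> Z \<and> \<alpha> \<in> L z \<and> Vh z \<inter> V y \<noteq> {}}"

text \<open>Infinite edge paths are indexed from 0: e 0 is the paper's e_1.
  label_prod G e k = alpha_1 ... alpha_k, vtx e k = z_k.\<close>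
fun label_prod :: "('g,'m) monoid_scheme \<Rightarrow> (nat \<Rightarrow> ('b,'g) edge) \<Rightarrow> nat \<Rightarrow> 'g" where
  "label_prod G e 0 = \<one>\<^bsub>G\<^esub>"
| "label_prod G e (Suc k) = label_prod G e k \<otimes>\<^bsub>G\<^esub> lab (e k)"

definition vtx :: "(nat \<Rightarrow> ('b,'g) edge) \<Rightarrow> nat \<Rightarrow> 'b" where
  "vtx e k = (if k = 0 then src (e 0) else tgt (e (k - 1)))"

definition strict_conical_coding ::
  "('g,'m) monoid_scheme \<Rightarrow> ('g \<Rightarrow> 'b \<Rightarrow> 'b) \<Rightarrow> ('b,'g) edge set \<Rightarrow> ('b \<Rightarrow> 'b::topological_space set)
   \<Rightarrow> (nat \<Rightarrow> ('b,'g) edge) \<Rightarrow> 'b \<Rightarrow> bool" where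
  "strict_conical_coding G act E W e \<zeta> \<longleftrightarrow>
     (\<forall>k. e k \<in> E) \<and> (\<forall>k. tgt (e k) = src (e (Suc k))) \<and>
     (\<forall>k. \<zeta> \<in> act (label_prod G e k) ` closure (W (vtx e k)))"

fun list_prod :: "('g,'m) monoid_scheme \<Rightarrow> 'g list \<Rightarrow> 'g" where
  "list_prod G [] = \<one>\<^bsub>G\<^esub>"
| "list_prod G (x # xs) = x \<otimes>\<^bsub>G\<^esub> list_prod G xs"

definition is_path_from :: "('b,'g) edge set \<Rightarrow> 'b \<Rightarrow> ('b,'g) edge list \<Rightarrow> bool" where
  "is_path_from E q0 es \<longleftrightarrow> set es \<subseteq> E \<and> (es \<noteq> [] \<longrightarrow> src (hd es) = q0) \<and>
     (\<forall>i. Suc i < length es \<longrightarrow> tgt (es ! i) = src (es ! Suc i))"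

definition final_vtx :: "'b \<Rightarrow> ('b,'g) edge list \<Rightarrow> 'b" where
  "final_vtx q0 es = (if es = [] then q0 else tgt (last es))"

definition strict_parabolic_coding ::
  "('g,'m) monoid_scheme \<Rightarrow> ('g \<Rightarrow> 'b \<Rightarrow> 'b) \<Rightarrow> 'b set \<Rightarrow> 'b set \<Rightarrow> ('b,'g) edge set
   \<Rightarrow> 'b \<Rightarrow> ('b,'g) edge list \<Rightarrow> 'b \<Rightarrow> bool" where
  "strict_parabolic_coding G act Pp Z E q0 es \<zeta> \<longleftrightarrow>
     q0 \<in> Z \<and> is_path_from E q0 es \<and> final_vtx q0 es \<in> parabolic_pts G act Pp \<and>
     \<zeta> = act (list_prod G (map lab es)) (final_vtx q0 es)"

end

theory Submission
  imports Defs
begin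

(* Pull zeta back along the automaton, starting at a vertex z0 with zeta in V(z0). A point
   x in V(z) either equals z or lies in some alpha Vh(z) with alpha in L(z); as the sets V(y)
   cover the boundary, alpha^-1 x then lies in Vh(z) and some V(y), i.e. there is an edge
   z -> y labelled alpha. For conical z this also works when x = z, since L(z) = {alpha} and
   Vh(z) = alpha^-1 V(z). So the pull-back can only get stuck at a state x = z with z parabolic,
   which gives a strict parabolic coding. Otherwise it runs forever, and the invariant
   zeta = alpha_1 ... alpha_k x_k with x_k in V(z_k), a subset of the closure of W(z_k), makes the
   infinite path a strict conical coding. *)

lemma list_prod_closed:
  assumes "monoid G" "set xs \<subseteq> carrier G"
  shows "list_prod G xs \<in> carrier G"
  using assms(2) by (induction xs) (simp_all add: assms(1) monoid.m_closed)

lemma list_prod_snoc: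
  assumes "monoid G" "set xs \<subseteq> carrier G" "x \<in> carrier G"
  shows "list_prod G (xs @ [x]) = list_prod G xs \<otimes>\<^bsub>G\<^esub> x"
  using assms(2)
proof (induction xs)
  case Nil
  then show ?case using assms by simp
next
  case (Cons a xs)
  then show ?case
    using assms list_prod_closed[OF assms(1), of xs] by (simp add: monoid.m_assoc)
qed

lemma label_prod_closed:
  assumes "monoid G" "\<forall>m<n. lab (e m) \<in> carrier G"
  shows "label_prod G e n \<in> carrier G"
  using assms(2) by (induction n) (simp_all add: assms(1) monoid.m_closed)

lemma list_prod_labels_eq_label_prod:
  assumes "monoid G" "\<forall>m<n. lab (e m) \<in> carrier G"
  shows "list_prod G (map lab (map e [0..<n])) = label_prod G e n"
  using assms(2)
proof (induction n)
  case (Suc n)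
  then have "set (map lab (map e [0..<n])) \<subseteq> carrier G" by auto
  with Suc show ?case by (simp add: list_prod_snoc[OF assms(1)])
qed simp

locale coding_automaton =
  fixes G :: "('g,'m) monoid_scheme"
    and act :: "'g \<Rightarrow> 'b::topological_space \<Rightarrow> 'b"
    and Pp Z :: "'b set"
    and L :: "'b \<Rightarrow> 'g set"
    and V W Vh :: "'b \<Rightarrow> 'b set"
  assumes group: "group G"
    and act_one: "\<And>x. act \<one>\<^bsub>G\<^esub> x = x"
    and act_mult: "\<And>g h x. g \<in> carrier G \<Longrightarrow> h \<in> carrier G \<Longrightarrow> act (g \<otimes>\<^bsub>G\<^esub> h) x = act g (act h x)"
    and labels_closed: "\<And>z. z \<in> Z \<Longrightarrow> L z \<subseteq> carrier G"
    and conical_labels: "\<And>z. z \<in> Z \<Longrightarrow> z \<notin> parabolic_pts G act Pp \<Longrightarrow>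
          \<exists>\<alpha>\<in>carrier G. L z = {\<alpha>} \<and> Vh z = act (inv\<^bsub>G\<^esub> \<alpha>) ` V z"
    and V_decomp: "\<And>z. z \<in> Z \<Longrightarrow> V z = {z} \<union> (\<Union>\<alpha>\<in>L z. act \<alpha> ` Vh z)"
    and closure_V_subset: "\<And>z. z \<in> Z \<Longrightarrow> closure (V z) \<subseteq> W z"
    and V_cover: "(\<Union>z\<in>Z. V z) = UNIV"
begin

interpretation grp: group G by (rule group)

abbreviation "E \<equiv> automaton_edges Z L Vh V"

lemma act_inv_act: "\<alpha> \<in> carrier G \<Longrightarrow> act (inv\<^bsub>G\<^esub> \<alpha>) (act \<alpha> x) = x"
  by (metis act_mult act_one grp.inv_closed grp.l_inv)

lemma act_act_inv: "\<alpha> \<in> carrier G \<Longrightarrow> act \<alpha> (act (inv\<^bsub>G\<^esub> \<alpha>) x) = x"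
  by (metis act_mult act_one grp.inv_closed grp.r_inv)

lemma edge_label_closed: "e \<in> E \<Longrightarrow> lab e \<in> carrier G"
  using labels_closed by (fastforce simp: automaton_edges_def lab_def)

text \<open>A state (z, x) stands for the point x \<in> V(z) still to be coded from the vertex z.
  The pull-back sequence below is junk after a terminal state, where no edge need exist.\<close>
definition terminal :: "'b \<times> 'b \<Rightarrow> bool" where
  "terminal s \<longleftrightarrow> snd s = fst s \<and> fst s \<in> parabolic_pts G act Pp"

definition pullback_edge :: "'b \<times> 'b \<Rightarrow> 'g \<times> 'b \<Rightarrow> bool" where
  "pullback_edge s c \<longleftrightarrow> (fst s, c) \<in> E \<and> act (inv\<^bsub>G\<^esub> (fst c)) (snd s) \<in> V (snd c)"

lemma pullback_edge_exists:
  assumes "z \<in> Z" "x \<in> V z" "\<not> terminal (z, x)"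
  shows "\<exists>c. pullback_edge (z, x) c"
proof -
  obtain \<alpha> where \<alpha>: "\<alpha> \<in> L z" "act (inv\<^bsub>G\<^esub> \<alpha>) x \<in> Vh z"
  proof (cases "x = z")
    case True
    with assms have "z \<notin> parabolic_pts G act Pp"
      unfolding terminal_def by simp
    then obtain \<alpha> where "L z = {\<alpha>}" "Vh z = act (inv\<^bsub>G\<^esub> \<alpha>) ` V z"
      using conical_labels[OF assms(1)] by blast
    then show ?thesis using that assms(2) by simp
  next
    case False
    with assms have "x \<in> (\<Union>\<alpha>\<in>L z. act \<alpha> ` Vh z)"
      using V_decomp by blast
    then obtain \<alpha> w where "\<alpha> \<in> L z" "w \<in> Vh z" "x = act \<alpha> w"
      by blast
    moreover have "\<alpha> \<in> carrier G"
      using labels_closed[OF assms(1)] \<open>\<alpha> \<in> L z\<close> by blast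
    ultimately show ?thesis
      using that by (simp add: act_inv_act)
  qed
  obtain y where "y \<in> Z" "act (inv\<^bsub>G\<^esub> \<alpha>) x \<in> V y"
    using V_cover by blast
  with \<alpha> assms(1) have "pullback_edge (z, x) (\<alpha>, y)"
    unfolding pullback_edge_def automaton_edges_def by auto
  then show ?thesis ..
qed

definition next_step :: "'b \<times> 'b \<Rightarrow> 'g \<times> 'b" where
  "next_step s = (SOME c. pullback_edge s c)"

primrec pullback :: "'b \<times> 'b \<Rightarrow> nat \<Rightarrow> 'b \<times> 'b" where
  "pullback s 0 = s"
| "pullback s (Suc n) =
     (snd (next_step (pullback s n)), act (inv\<^bsub>G\<^esub> (fst (next_step (pullback s n)))) (snd (pullback s n)))"

definition pullback_path :: "'b \<times> 'b \<Rightarrow> nat \<Rightarrow> ('b,'g) edge" where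
  "pullback_path s n = (fst (pullback s n), next_step (pullback s n))"

lemma pullback_path_connected: "tgt (pullback_path s k) = src (pullback_path s (Suc k))"
  by (simp add: pullback_path_def src_def tgt_def)

lemma vtx_pullback_path: "vtx (pullback_path s) k = fst (pullback s k)"
  by (cases k) (simp_all add: vtx_def pullback_path_def src_def tgt_def)

lemma next_step_pullback_edge:
  assumes "z \<in> Z" "x \<in> V z" "\<not> terminal (z, x)"
  shows "pullback_edge (z, x) (next_step (z, x))"
  unfolding next_step_def using pullback_edge_exists[OF assms] by (rule someI_ex)

lemma pullback_invariant:
  assumes "z0 \<in> Z" "\<zeta> \<in> V z0" "\<forall>m<n. \<not> terminal (pullback (z0, \<zeta>) m)"
  shows "(\<forall>m<n. pullback_path (z0, \<zeta>) m \<in> E) \<and>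
    fst (pullback (z0, \<zeta>) n) \<in> Z \<and> snd (pullback (z0, \<zeta>) n) \<in> V (fst (pullback (z0, \<zeta>) n)) \<and>
    act (label_prod G (pullback_path (z0, \<zeta>)) n) (snd (pullback (z0, \<zeta>) n)) = \<zeta>"
  using assms(3)
proof (induction n)
  case 0
  then show ?case using assms act_one by simp
next
  case (Suc n)
  define e where "e = pullback_path (z0, \<zeta>)"
  obtain z x where s: "pullback (z0, \<zeta>) n = (z, x)" by fastforce
  obtain \<alpha> y where c: "next_step (z, x) = (\<alpha>, y)" by fastforce
  from Suc have IH: "\<forall>m<n. e m \<in> E" "z \<in> Z" "x \<in> V z" "act (label_prod G e n) x = \<zeta>"
    unfolding e_def s by auto
  have "\<not> terminal (z, x)"
    using Suc.prems s by (metis lessI)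
  then have "pullback_edge (z, x) (\<alpha>, y)"
    using next_step_pullback_edge[OF IH(2,3)] c by simp
  then have edge: "e n = (z, \<alpha>, y)" "e n \<in> E" and pulled: "act (inv\<^bsub>G\<^esub> \<alpha>) x \<in> V y"
    unfolding pullback_edge_def e_def pullback_path_def s c by simp_all
  have step: "pullback (z0, \<zeta>) (Suc n) = (y, act (inv\<^bsub>G\<^esub> \<alpha>) x)"
    by (simp add: s c)
  have \<alpha>: "\<alpha> \<in> carrier G"
    using edge_label_closed[OF edge(2)] by (simp add: edge(1) lab_def)
  have "label_prod G e n \<in> carrier G"
    by (rule label_prod_closed[OF grp.is_monoid]) (use IH(1) edge_label_closed in blast)
  then have "act (label_prod G e (Suc n)) (act (inv\<^bsub>G\<^esub> \<alpha>) x) = \<zeta>"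
    using \<alpha> IH(4) by (simp add: edge(1) lab_def act_mult act_act_inv)
  moreover have "y \<in> Z"
    using edge by (auto simp: automaton_edges_def)
  moreover have "\<forall>m<Suc n. e m \<in> E"
    using IH(1) edge(2) less_Suc_eq by auto
  ultimately show ?case
    using pulled step unfolding e_def by simp
qed

lemma conical_coding_if_never_terminal:
  assumes "z0 \<in> Z" "\<zeta> \<in> V z0" "\<forall>n. \<not> terminal (pullback (z0, \<zeta>) n)"
  shows "strict_conical_coding G act E W (pullback_path (z0, \<zeta>)) \<zeta>"
  unfolding strict_conical_coding_def
proof (intro conjI allI)
  fix k
  have "\<forall>m<n. \<not> terminal (pullback (z0, \<zeta>) m)" for n
    using assms(3) by blast
  note inv = pullback_invariant[OF assms(1,2) this]
  show "pullback_path (z0, \<zeta>) k \<in> E" using inv[of "Suc k"] by blast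
  show "tgt (pullback_path (z0, \<zeta>) k) = src (pullback_path (z0, \<zeta>) (Suc k))"
    by (rule pullback_path_connected)
  have "snd (pullback (z0, \<zeta>) k) \<in> closure (W (fst (pullback (z0, \<zeta>) k)))"
    using inv[of k] closure_V_subset closure_subset by blast
  then show "\<zeta> \<in> act (label_prod G (pullback_path (z0, \<zeta>)) k) ` closure (W (vtx (pullback_path (z0, \<zeta>)) k))"
    using inv[of k] by (force simp: vtx_pullback_path)
qed

lemma parabolic_coding_if_terminal:
  assumes "z0 \<in> Z" "\<zeta> \<in> V z0" "terminal (pullback (z0, \<zeta>) n)"
    and "\<forall>m<n. \<not> terminal (pullback (z0, \<zeta>) m)"
  shows "strict_parabolic_coding G act Pp Z E z0 (map (pullback_path (z0, \<zeta>)) [0..<n]) \<zeta>"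
proof -
  let ?e = "pullback_path (z0, \<zeta>)" and ?s = "pullback (z0, \<zeta>) n"
  have inv: "\<forall>m<n. ?e m \<in> E" "act (label_prod G ?e n) (snd ?s) = \<zeta>"
    using pullback_invariant[OF assms(1,2,4)] by blast+
  have final: "final_vtx z0 (map ?e [0..<n]) = fst ?s"
    by (cases n) (simp_all add: final_vtx_def pullback_path_def tgt_def)
  have "list_prod G (map lab (map ?e [0..<n])) = label_prod G ?e n"
    using inv(1) edge_label_closed by (intro list_prod_labels_eq_label_prod[OF grp.is_monoid]) blast
  moreover have "is_path_from E z0 (map ?e [0..<n])"
    unfolding is_path_from_def using inv(1) pullback_path_connected
    by (auto simp: hd_map pullback_path_def src_def)
  ultimately show ?thesis
    unfolding strict_parabolic_coding_def
    using assms(1,3) inv(2) final by (simp add: terminal_def)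
qed

theorem strict_coding_exists:
  "(\<exists>e. strict_conical_coding G act E W e \<zeta>) \<or> (\<exists>q0 es. strict_parabolic_coding G act Pp Z E q0 es \<zeta>)"
proof -
  obtain z0 where z0: "z0 \<in> Z" "\<zeta> \<in> V z0" using V_cover by blast
  show ?thesis
  proof (cases "\<exists>n. terminal (pullback (z0, \<zeta>) n)")
    case True
    define n where "n = (LEAST n. terminal (pullback (z0, \<zeta>) n))"
    have "terminal (pullback (z0, \<zeta>) n)"
      unfolding n_def using True by (rule LeastI_ex)
    moreover have "\<forall>m<n. \<not> terminal (pullback (z0, \<zeta>) m)"
      unfolding n_def using not_less_Least by blast
    ultimately show ?thesis
      using parabolic_coding_if_terminal[OF z0] by blast
  next
    case False
    then show ?thesis
      using conical_coding_if_never_terminal[OF z0] by blast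
  qed
qed

end

theorem mainTheorem7:
  fixes G :: "('g,'m) monoid_scheme"
    and act :: "'g \<Rightarrow> 'b::metric_space \<Rightarrow> 'b"
    and Pp :: "'b set" and K :: "'b \<Rightarrow> 'b set"
    and D DPi \<epsilon> :: real
    and Z :: "'b set"
    and V W Vh Wh :: "'b \<Rightarrow> 'b set"
    and L :: "'b \<Rightarrow> 'g set"
  assumes grp: "group G"
    and fin_gen: "\<exists>S. finite S \<and> S \<subseteq> carrier G \<and> generate G S = carrier G"
    and bdry_compact: "compact (UNIV :: 'b set)"
    and bdry_infinite: "infinite (UNIV :: 'b set)"
    and act_one: "\<forall>x. act \<one>\<^bsub>G\<^esub> x = x"
    and act_mult: "\<forall>g\<in>carrier G. \<forall>h\<in>carrier G. \<forall>x. act (g \<otimes>\<^bsub>G\<^esub> h) x = act g (act h x)"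
    and act_cont: "\<forall>g\<in>carrier G. continuous_on UNIV (act g)"
    and Pp_fin: "finite Pp" and Pp_ne: "Pp \<noteq> {}"
    and Pp_inf: "\<forall>p\<in>Pp. infinite (stab G act p)"
    and D_pos: "D > 0"
    and D_sep: "\<forall>x y. x \<noteq> y \<longrightarrow> (\<exists>g\<in>carrier G. dist (act g x) (act g y) > D)"
    and K_prop: "\<forall>p\<in>Pp. compact (K p) \<and> p \<notin> K p \<and>
                   (\<Union>g\<in>stab G act p. act g ` K p) = UNIV - {p}"
    and DPi_pos: "DPi > 0"
    and DPi_prop: "\<forall>p\<in>Pp. DPi < diameter (K p) \<and> DPi < infdist p (K p)"
    and eps_pos: "0 < \<epsilon>" and eps_bound: "\<epsilon> < min (D / 5) (DPi / 5)"
    and Z_fin: "finite Z"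
    and opens: "\<forall>z\<in>Z. open (V z) \<and> open (W z) \<and> open (Vh z) \<and> open (Wh z)"
    and conical_data: "\<forall>z\<in>Z. z \<notin> parabolic_pts G act Pp \<longrightarrow>
         (\<exists>\<alpha>\<in>carrier G. L z = {\<alpha>} \<and> Vh z = act (inv\<^bsub>G\<^esub> \<alpha>) ` V z \<and> Wh z = act (inv\<^bsub>G\<^esub> \<alpha>) ` W z)"
    and parabolic_data: "\<forall>z\<in>Z. z \<in> parabolic_pts G act Pp \<longrightarrow>
         (\<exists>g\<in>carrier G. \<exists>p\<in>Pp. \<exists>F. z = act g p \<and> finite F \<and>
            L z = l_coset G g (stab G act p) - F \<and>
            Vh z \<subseteq> Wh z \<and> Wh z \<subseteq> UNIV - {p} \<and> p \<notin> cnbhd \<epsilon> (Wh z))"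
    and V_cover: "(\<Union>z\<in>Z. V z) = UNIV"
    and C1: "\<forall>z\<in>Z. diameter (W z) < \<epsilon>"
    and C2: "\<forall>z\<in>Z. diameter (Wh z) > 4 * \<epsilon>"
    and C3: "\<forall>z\<in>Z. cnbhd (2 * \<epsilon>) (Vh z) \<subseteq> Wh z"
    and C4: "\<forall>z\<in>Z. W z = {z} \<union> (\<Union>\<alpha>\<in>L z. act \<alpha> ` Wh z)"
    and C5: "\<forall>z\<in>Z. V z = {z} \<union> (\<Union>\<alpha>\<in>L z. act \<alpha> ` Vh z) \<and> closure (V z) \<subseteq> W z"
    and C6: "\<forall>y\<in>Z. \<forall>z\<in>Z. (closure (Vh z) \<inter> closure (V y) = {}) \<longleftrightarrow> (Vh z \<inter> V y = {})"
  shows "\<forall>\<zeta>::'b.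
           (\<exists>e. strict_conical_coding G act (automaton_edges Z L Vh V) W e \<zeta>) \<or>
           (\<exists>q0 es. strict_parabolic_coding G act Pp Z (automaton_edges Z L Vh V) q0 es \<zeta>)"
proof -
  have labels: "L z \<subseteq> carrier G" if z: "z \<in> Z" for z
  proof (cases "z \<in> parabolic_pts G act Pp")
    case True
    then obtain g p F where "g \<in> carrier G" "L z = l_coset G g (stab G act p) - F"
      using parabolic_data z by blast
    then show ?thesis
      using group.l_coset_subset_G[OF grp, of "stab G act p" g] by (auto simp: stab_def)
  next
    case False
    then show ?thesis using conical_data z by auto
  qed
  interpret coding_automaton G act Pp Z L V W Vh
  proof (rule coding_automaton.intro)
    show "\<And>z. z \<in> Z \<Longrightarrow> z \<notin> parabolic_pts G act Pp \<Longrightarrow>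
        \<exists>\<alpha>\<in>carrier G. L z = {\<alpha>} \<and> Vh z = act (inv\<^bsub>G\<^esub> \<alpha>) ` V z"
      using conical_data by meson
    show "\<And>z. z \<in> Z \<Longrightarrow> closure (V z) \<subseteq> W z"
      using C5 by blast
  qed (use grp act_one act_mult labels C5 V_cover in \<open>simp_all\<close>)
  show ?thesis using strict_coding_exists by blast
qed

end
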